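(* Let $K$ be a perfect field. Then $K[X_1]^{G_1}=K[a_1,\Delta]$ if $\mathrm{char}(K)=2$, and $K[X_1]^{G_1}=K[b_2,\Delta]$ if $\mathrm{char}(K)=3$.
   Context: $K[X_1]=K[a_1,a_2,a_3,a_4,a_6]$ is the coordinate ring of the space of Weierstrass equations $y^2+a_1xy+a_3y=x^3+a_2x^2+a_4x+a_6$. $G_1$ is the group of substitutions $[1;r,s,t]$: $x=x'+r$, $y=y'+sx'+t$, acting on the coefficients; $K[X_1]^{G_1}$ is the ring of polynomials $F$ with $F\circ g=F$ for all $g\in G_1(\overline K)$. Here $b_2=a_1^2+4a_2$, $b_4=2a_4+a_1a_3$, $b_6=a_3^2+4a_6$, $b_8=a_1^2a_6+4a_2a_6-a_1a_3a_4+a_2a_3^2-a_4^2$, and $\Delta=-b_2^2b_8-8b_4^3-27b_6^2+9b_2b_4b_6$. *)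

theory Defs
  imports "HOL-Library.Poly_Mapping" "HOL-Algebra.Algebraic_Closure_Type"
begin

type_synonym 'a mpoly = "(nat \<Rightarrow>\<^sub>0 nat) \<Rightarrow>\<^sub>0 'a"

definition mVar :: "nat \<Rightarrow> 'a::comm_ring_1 mpoly" where
  "mVar i = Poly_Mapping.single (Poly_Mapping.single i 1) 1"

definition mConst :: "'a::comm_ring_1 \<Rightarrow> 'a mpoly" where
  "mConst c = Poly_Mapping.single 0 c"

definition mvars :: "'a::zero mpoly \<Rightarrow> nat set" where
  "mvars p = \<Union> (Poly_Mapping.keys ` Poly_Mapping.keys p)"

definition minsert :: "('a::zero \<Rightarrow> 'b::comm_ring_1) \<Rightarrow> (nat \<Rightarrow> 'b) \<Rightarrow> 'a mpoly \<Rightarrow> 'b" where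
  "minsert f v p = (\<Sum>m\<in>Poly_Mapping.keys p. f (Poly_Mapping.lookup p m) * (\<Prod>i\<in>Poly_Mapping.keys m. v i ^ Poly_Mapping.lookup m i))"

definition wa1 :: "'a::comm_ring_1 mpoly" where "wa1 = mVar 0"
definition wa2 :: "'a::comm_ring_1 mpoly" where "wa2 = mVar 1"
definition wa3 :: "'a::comm_ring_1 mpoly" where "wa3 = mVar 2"
definition wa4 :: "'a::comm_ring_1 mpoly" where "wa4 = mVar 3"
definition wa6 :: "'a::comm_ring_1 mpoly" where "wa6 = mVar 4"

definition wb2 :: "'a::comm_ring_1 mpoly" where "wb2 = wa1^2 + 4*wa2"
definition wb4 :: "'a::comm_ring_1 mpoly" where "wb4 = 2*wa4 + wa1*wa3"
definition wb6 :: "'a::comm_ring_1 mpoly" where "wb6 = wa3^2 + 4*wa6"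
definition wb8 :: "'a::comm_ring_1 mpoly" where
  "wb8 = wa1^2*wa6 + 4*wa2*wa6 - wa1*wa3*wa4 + wa2*wa3^2 - wa4^2"
definition wDelta :: "'a::comm_ring_1 mpoly" where
  "wDelta = - (wb2^2*wb8) - 8*wb4^3 - 27*wb6^2 + 9*wb2*wb4*wb6"

definition KX1 :: "'a::comm_ring_1 mpoly set" where
  "KX1 = {p. mvars p \<subseteq> {0..4}}"

text \<open>The substitution [1;r,s,t] acting on the coefficients (u = 1 in the standard
  transformation formulas), as polynomials over the algebraic closure.\<close>
definition gsub :: "'b::comm_ring_1 \<Rightarrow> 'b \<Rightarrow> 'b \<Rightarrow> nat \<Rightarrow> 'b mpoly" where
  "gsub r s t i =
    (let R = mConst r; S = mConst s; T = mConst t in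
     if i = 0 then wa1 + 2*S
     else if i = 1 then wa2 - S*wa1 + 3*R - S^2
     else if i = 2 then wa3 + R*wa1 + 2*T
     else if i = 3 then wa4 - S*wa3 + 2*R*wa2 - (T + R*S)*wa1 + 3*R^2 - 2*S*T
     else if i = 4 then wa6 + R*wa4 + R^2*wa2 + R^3 - T*wa3 - T^2 - R*T*wa1
     else mVar i)"

definition to_acp :: "'a::field mpoly \<Rightarrow> 'a alg_closure mpoly" where
  "to_acp p = minsert (\<lambda>c. mConst (to_ac c)) mVar p"

definition gact :: "'a::field alg_closure \<Rightarrow> 'a alg_closure \<Rightarrow> 'a alg_closure \<Rightarrow> 'a mpoly \<Rightarrow> 'a alg_closure mpoly" where
  "gact r s t F = minsert (\<lambda>c. mConst (to_ac c)) (gsub r s t) F"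

definition G1_invariants :: "'a::field mpoly set" where
  "G1_invariants = {F \<in> KX1. \<forall>r s t :: 'a alg_closure. gact r s t F = to_acp F}"

definition alg_gen :: "'a::comm_ring_1 mpoly list \<Rightarrow> 'a mpoly set" where
  "alg_gen gs = {minsert mConst (\<lambda>i. if i < length gs then gs ! i else 0) P | P.
                  mvars P \<subseteq> {..<length gs}}"

definition perfect_field :: "'a::field itself \<Rightarrow> bool" where
  "perfect_field _ \<longleftrightarrow> CHAR('a) = 0 \<or> (\<forall>x::'a. \<exists>y. y ^ CHAR('a) = x)"

end

theory Submission
  imports Defs
begin

text \<open>Over the algebraic closure of \<open>K\<close>, a Weierstrass equation with \<open>a\<^sub>1 \<noteq> 0\<close> in characteristic 2, resp. with
  \<open>b\<^sub>2 \<noteq> 0\<close> in characteristic 3, is moved by some \<open>[1; r, s, t]\<close> to the normal form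
  \<open>(a\<^sub>1, 0, 0, 0, a\<^sub>6)\<close>, resp. \<open>(0, b\<^sub>2, 0, 0, a\<^sub>6)\<close>, on which \<open>\<Delta> = a\<^sub>1\<^sup>6 a\<^sub>6\<close>,
  resp. \<open>\<Delta> = - b\<^sub>2\<^sup>3 a\<^sub>6\<close>. An invariant \<open>F\<close> therefore equals \<open>H(a\<^sub>1, \<Delta> / a\<^sub>1\<^sup>6)\<close>,
  resp. \<open>H(b\<^sub>2, \<Delta> / b\<^sub>2\<^sup>3)\<close>, where \<open>H\<close> is the restriction of \<open>F\<close> to the normal forms.
  On the curves \<open>(u, 0, w, 0, 0)\<close>, resp. \<open>(0, u, 0, w, 0)\<close>, \<open>F\<close> stays polynomial as
  \<open>u \<rightarrow> 0\<close> while \<open>\<Delta>\<close> takes every value, so this Laurent expression has no negative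
  powers of \<open>a\<^sub>1\<close>, resp. \<open>b\<^sub>2\<close>, and \<open>F\<close> is a polynomial in \<open>a\<^sub>1\<close>, resp. \<open>b\<^sub>2\<close>, and \<open>\<Delta>\<close>.\<close>

section \<open>Ring homomorphisms and evaluation of polynomials\<close>

locale comm_ring_hom =
  fixes hom :: "'a::comm_ring_1 \<Rightarrow> 'b::comm_ring_1"
  assumes hom_add: "hom (x + y) = hom x + hom y"
    and hom_mult: "hom (x * y) = hom x * hom y"
    and hom_one: "hom 1 = 1"
begin

lemma hom_zero: "hom 0 = 0"
  using hom_add[of 0 0] by simp

lemma hom_uminus: "hom (- x) = - hom x"
  using hom_add[of x "- x"] by (simp add: hom_zero eq_neg_iff_add_eq_0 add.commute)

lemma hom_diff: "hom (x - y) = hom x - hom y"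
  using hom_add[of x "- y"] by (simp add: hom_uminus)

lemma hom_power: "hom (x ^ n) = hom x ^ n"
  by (induction n) (simp_all add: hom_one hom_mult)

lemma hom_sum: "hom (\<Sum>i\<in>A. f i) = (\<Sum>i\<in>A. hom (f i))"
  by (induction A rule: infinite_finite_induct) (simp_all add: hom_zero hom_add)

lemma hom_prod: "hom (\<Prod>i\<in>A. f i) = (\<Prod>i\<in>A. hom (f i))"
  by (induction A rule: infinite_finite_induct) (simp_all add: hom_one hom_mult)

lemma hom_of_nat: "hom (of_nat n) = of_nat n"
  by (induction n) (simp_all add: hom_zero hom_one hom_add)

lemma hom_numeral: "hom (numeral n) = numeral n"
  using hom_of_nat[of "numeral n"] by simp

lemmas hom_simps = hom_add hom_mult hom_one hom_zero hom_uminus hom_diff hom_power hom_numeral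

end

lemma comm_ring_hom_id: "comm_ring_hom (\<lambda>x. x)"
  by unfold_locales simp_all

lemma comm_ring_hom_comp:
  "comm_ring_hom f \<Longrightarrow> comm_ring_hom g \<Longrightarrow> comm_ring_hom (\<lambda>x. g (f x))"
  by (simp add: comm_ring_hom_def)

lemma comm_ring_hom_inj:
  fixes h :: "'a::field \<Rightarrow> 'b::field"
  assumes "comm_ring_hom h"
  shows "inj h"
proof (rule injI)
  interpret comm_ring_hom h by fact
  fix x y assume "h x = h y"
  then have "h (x - y) = 0" by (simp add: hom_diff)
  then have "h ((x - y) * inverse (x - y)) = 0" by (simp add: hom_mult)
  then show "x = y" by (cases "x = y") (simp_all add: hom_one)
qed

interpretation to_ac: comm_ring_hom to_ac
  by unfold_locales simp_all

interpretation mConst: comm_ring_hom mConst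
  by unfold_locales (simp_all add: mConst_def single_add mult_single)

lemma comm_ring_hom_poly: "comm_ring_hom (\<lambda>q. poly q u)"
  by unfold_locales simp_all

lemma comm_ring_hom_map_poly:
  assumes "comm_ring_hom h"
  shows "comm_ring_hom (map_poly h)"
proof -
  interpret comm_ring_hom h by fact
  show ?thesis
    by unfold_locales
      (simp_all add: poly_eq_iff coeff_map_poly hom_zero hom_one hom_add hom_mult hom_sum coeff_mult)
qed

abbreviation meval :: "(nat \<Rightarrow> 'a::comm_ring_1) \<Rightarrow> 'a mpoly \<Rightarrow> 'a" where
  "meval x p \<equiv> minsert (\<lambda>c. c) x p"

definition monom_eval :: "(nat \<Rightarrow> 'b::comm_ring_1) \<Rightarrow> (nat \<Rightarrow>\<^sub>0 nat) \<Rightarrow> 'b" where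
  "monom_eval v m = (\<Prod>i\<in>Poly_Mapping.keys m. v i ^ Poly_Mapping.lookup m i)"

lemma monom_eval_superset:
  assumes "finite S" "Poly_Mapping.keys m \<subseteq> S"
  shows "monom_eval v m = (\<Prod>i\<in>S. v i ^ Poly_Mapping.lookup m i)"
  unfolding monom_eval_def
  by (rule prod.mono_neutral_left[OF assms]) (simp add: in_keys_iff)

lemma monom_eval_add: "monom_eval v (m + n) = monom_eval v m * monom_eval v n"
proof -
  let ?S = "Poly_Mapping.keys m \<union> Poly_Mapping.keys n"
  have "monom_eval v (m + n) = (\<Prod>i\<in>?S. v i ^ Poly_Mapping.lookup (m + n) i)"
    by (rule monom_eval_superset) (simp_all add: keys_add)
  also have "\<dots> = (\<Prod>i\<in>?S. v i ^ Poly_Mapping.lookup m i * v i ^ Poly_Mapping.lookup n i)"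
    by (simp add: lookup_add power_add)
  also have "\<dots> = monom_eval v m * monom_eval v n"
    using monom_eval_superset[of ?S m v] monom_eval_superset[of ?S n v] by (simp add: prod.distrib)
  finally show ?thesis .
qed

lemma monom_eval_single: "monom_eval v (Poly_Mapping.single i k) = v i ^ k"
  by (simp add: monom_eval_def)

lemma minsert_eq_monom_eval:
  "minsert f v p = (\<Sum>m\<in>Poly_Mapping.keys p. f (Poly_Mapping.lookup p m) * monom_eval v m)"
  by (simp add: minsert_def monom_eval_def)

lemma minsert_superset:
  assumes "f 0 = 0" "finite S" "Poly_Mapping.keys p \<subseteq> S"
  shows "minsert f v p = (\<Sum>m\<in>S. f (Poly_Mapping.lookup p m) * monom_eval v m)"
  unfolding minsert_eq_monom_eval
  by (rule sum.mono_neutral_left[OF assms(2,3)]) (simp add: in_keys_iff assms(1))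

lemma minsert_zero [simp]: "minsert f v 0 = 0"
  by (simp add: minsert_def)

lemma minsert_single:
  "f 0 = 0 \<Longrightarrow> minsert f v (Poly_Mapping.single m c) = f c * monom_eval v m"
  by (cases "c = 0") (simp_all add: minsert_eq_monom_eval)

lemma poly_mapping_sum_single:
  "p = (\<Sum>m\<in>Poly_Mapping.keys p. Poly_Mapping.single m (Poly_Mapping.lookup p m))"
  by (rule poly_mapping_eqI)
    (simp add: lookup_sum lookup_single when_def in_keys_iff sum.delta)

context comm_ring_hom
begin

lemma minsert_add: "minsert hom v (p + q) = minsert hom v p + minsert hom v q"
proof -
  let ?S = "Poly_Mapping.keys p \<union> Poly_Mapping.keys q"
  show ?thesis
    using keys_add[of p q]
    by (simp add: minsert_superset[of hom ?S] hom_zero lookup_add hom_add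
        distrib_right sum.distrib)
qed

lemma minsert_sum: "minsert hom v (\<Sum>i\<in>A. p i) = (\<Sum>i\<in>A. minsert hom v (p i))"
  by (induction A rule: infinite_finite_induct) (simp_all add: minsert_add)

lemma minsert_mult: "minsert hom v (p * q) = minsert hom v p * minsert hom v q"
proof -
  let ?P = "Poly_Mapping.keys p" and ?Q = "Poly_Mapping.keys q"
  let ?a = "Poly_Mapping.lookup p" and ?b = "Poly_Mapping.lookup q"
  have "p * q = (\<Sum>m\<in>?P. Poly_Mapping.single m (?a m)) * (\<Sum>n\<in>?Q. Poly_Mapping.single n (?b n))"
    using poly_mapping_sum_single[of p] poly_mapping_sum_single[of q] by simp
  also have "\<dots> = (\<Sum>m\<in>?P. \<Sum>n\<in>?Q. Poly_Mapping.single (m + n) (?a m * ?b n))"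
    by (simp add: sum_product mult_single)
  finally have "minsert hom v (p * q)
      = (\<Sum>m\<in>?P. \<Sum>n\<in>?Q. hom (?a m * ?b n) * monom_eval v (m + n))"
    by (simp add: minsert_sum minsert_single hom_zero)
  also have "\<dots> = (\<Sum>m\<in>?P. \<Sum>n\<in>?Q. (hom (?a m) * monom_eval v m) * (hom (?b n) * monom_eval v n))"
    by (simp add: hom_mult monom_eval_add mult_ac)
  also have "\<dots> = minsert hom v p * minsert hom v q"
    by (simp add: minsert_eq_monom_eval sum_product)
  finally show ?thesis .
qed

lemma comm_ring_hom_minsert: "comm_ring_hom (minsert hom v)"
proof
  show "minsert hom v 1 = 1"
    using minsert_single[of hom v 0 1] by (simp add: hom_zero hom_one monom_eval_def)
qed (simp_all add: minsert_add minsert_mult)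

lemma minsert_mVar: "minsert hom v (mVar i) = v i"
  by (simp add: mVar_def minsert_single hom_zero hom_one monom_eval_single)

lemma minsert_mConst: "minsert hom v (mConst c) = hom c"
  by (simp add: mConst_def minsert_single hom_zero monom_eval_def)

lemma hom_minsert: "hom (minsert f v p) = minsert (\<lambda>c. hom (f c)) (\<lambda>i. hom (v i)) p"
  by (simp add: minsert_def hom_sum hom_mult hom_prod hom_power)

end

lemma comm_ring_hom_meval: "comm_ring_hom (meval x)"
  by (rule comm_ring_hom.comm_ring_hom_minsert[OF comm_ring_hom_id])

lemma meval_mVar [simp]: "meval x (mVar i) = x i"
  by (rule comm_ring_hom.minsert_mVar[OF comm_ring_hom_id])

lemma meval_mConst [simp]: "meval x (mConst c) = c"
  by (rule comm_ring_hom.minsert_mConst[OF comm_ring_hom_id])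

lemma minsert_cong:
  assumes "\<And>i. i \<in> mvars p \<Longrightarrow> v i = w i"
  shows "minsert f v p = minsert f w p"
  unfolding minsert_eq_monom_eval monom_eval_def
  by (intro sum.cong prod.cong refl arg_cong2[where f = "(*)"] arg_cong2[where f = "(^)"] assms)
    (auto simp: mvars_def)

lemma minsert_minsert:
  assumes "comm_ring_hom f"
  shows "minsert f v (minsert mConst w p) = minsert f (\<lambda>i. minsert f v (w i)) p"
proof -
  interpret comm_ring_hom "minsert f v"
    using assms by (rule comm_ring_hom.comm_ring_hom_minsert)
  show ?thesis
    by (simp add: hom_minsert comm_ring_hom.minsert_mConst[OF assms])
qed

lemma mVar_power: "mVar i ^ k = Poly_Mapping.single (Poly_Mapping.single i k) (1::'a::comm_ring_1)"
  by (induction k) (simp_all add: mVar_def mult_single single_add[symmetric])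

lemma monom_eval_mVar: "monom_eval mVar m = (Poly_Mapping.single m 1 :: 'a::comm_ring_1 mpoly)"
proof -
  have "monom_eval mVar m = (\<Prod>i\<in>Poly_Mapping.keys m.
      Poly_Mapping.single (Poly_Mapping.single i (Poly_Mapping.lookup m i)) (1::'a))"
    by (simp add: monom_eval_def mVar_power)
  also have "\<dots> = Poly_Mapping.single
      (\<Sum>i\<in>Poly_Mapping.keys m. Poly_Mapping.single i (Poly_Mapping.lookup m i)) 1"
    by (induction rule: finite_induct[OF finite_keys]) (simp_all add: mult_single)
  also have "\<dots> = Poly_Mapping.single m 1"
    using poly_mapping_sum_single[of m] by simp
  finally show ?thesis .
qed

lemma minsert_mConst_mVar:
  "minsert (\<lambda>c. mConst (f c)) mVar p
     = (\<Sum>m\<in>Poly_Mapping.keys p. Poly_Mapping.single m (f (Poly_Mapping.lookup p m)))"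
  by (simp add: minsert_eq_monom_eval monom_eval_mVar mConst_def mult_single)

lemma minsert_mConst_mVar_id [simp]: "minsert mConst mVar p = p"
  using minsert_mConst_mVar[of "\<lambda>c. c" p] poly_mapping_sum_single[of p] by simp

lemma minsert_mConst_mVar_eq_0_iff:
  assumes "inj f" "f 0 = 0"
  shows "minsert (\<lambda>c. mConst (f c)) mVar p = 0 \<longleftrightarrow> p = 0"
proof
  assume p: "minsert (\<lambda>c. mConst (f c)) mVar p = 0"
  show "p = 0"
  proof (rule poly_mapping_eqI)
    fix k
    have "Poly_Mapping.lookup (minsert (\<lambda>c. mConst (f c)) mVar p) k = 0"
      using p by simp
    then have "f (Poly_Mapping.lookup p k) = 0"
      by (cases "k \<in> Poly_Mapping.keys p")
        (simp_all add: minsert_mConst_mVar lookup_sum lookup_single when_def sum.delta in_keys_iff assms(2))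
    then show "Poly_Mapping.lookup p k = Poly_Mapping.lookup 0 k"
      using assms by (simp add: inj_eq[symmetric])
  qed
qed (simp add: minsert_def)

definition semiring_closed :: "'a::comm_ring_1 set \<Rightarrow> bool" where
  "semiring_closed R \<longleftrightarrow> 0 \<in> R \<and> 1 \<in> R \<and> (\<forall>x\<in>R. \<forall>y\<in>R. x + y \<in> R \<and> x * y \<in> R)"

lemma semiring_closed_sum:
  "semiring_closed R \<Longrightarrow> (\<And>i. i \<in> A \<Longrightarrow> f i \<in> R) \<Longrightarrow> (\<Sum>i\<in>A. f i) \<in> R"
  by (induction A rule: infinite_finite_induct) (auto simp: semiring_closed_def)

lemma semiring_closed_prod:
  "semiring_closed R \<Longrightarrow> (\<And>i. i \<in> A \<Longrightarrow> f i \<in> R) \<Longrightarrow> (\<Prod>i\<in>A. f i) \<in> R"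
  by (induction A rule: infinite_finite_induct) (auto simp: semiring_closed_def)

lemma semiring_closed_power: "semiring_closed R \<Longrightarrow> x \<in> R \<Longrightarrow> x ^ n \<in> R"
  by (induction n) (auto simp: semiring_closed_def)

lemma semiring_closed_mult: "semiring_closed R \<Longrightarrow> x \<in> R \<Longrightarrow> y \<in> R \<Longrightarrow> x * y \<in> R"
  by (simp add: semiring_closed_def)

lemma semiring_closed_image:
  assumes "comm_ring_hom f" "semiring_closed R"
  shows "semiring_closed (f ` R)"
proof -
  interpret comm_ring_hom f by fact
  have R: "0 \<in> R" "1 \<in> R" "\<And>x y. x \<in> R \<Longrightarrow> y \<in> R \<Longrightarrow> x + y \<in> R \<and> x * y \<in> R"
    using assms(2) by (simp_all add: semiring_closed_def)
  show ?thesis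
    unfolding semiring_closed_def
  proof (intro conjI ballI)
    show "0 \<in> f ` R" "1 \<in> f ` R"
      using R(1,2) hom_zero hom_one image_eqI by metis+
  next
    fix a b assume "a \<in> f ` R" "b \<in> f ` R"
    then obtain x y where "x \<in> R" "y \<in> R" "a = f x" "b = f y" by blast
    then have "a + b = f (x + y)" "a * b = f (x * y)"
      by (simp_all add: hom_add hom_mult)
    then show "a + b \<in> f ` R" "a * b \<in> f ` R"
      using R(3)[OF \<open>x \<in> R\<close> \<open>y \<in> R\<close>] by blast+
  qed
qed

lemma minsert_mem:
  assumes "semiring_closed R" "\<And>c. f c \<in> R" "\<And>i. i \<in> mvars p \<Longrightarrow> v i \<in> R"
  shows "minsert f v p \<in> R"
  unfolding minsert_def
  using assms
  by (intro semiring_closed_sum semiring_closed_mult semiring_closed_prod semiring_closed_power)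
    (auto simp: mvars_def)

lemma mvars_add: "mvars (p + q) \<subseteq> mvars p \<union> mvars q"
  unfolding mvars_def using keys_add[of p q] by auto

lemma mvars_mult: "mvars (p * q) \<subseteq> mvars p \<union> mvars q"
proof
  fix i assume "i \<in> mvars (p * q)"
  then obtain m where m: "m \<in> Poly_Mapping.keys (p * q)" "i \<in> Poly_Mapping.keys m"
    by (auto simp: mvars_def)
  then obtain a b where "m = a + b" "a \<in> Poly_Mapping.keys p" "b \<in> Poly_Mapping.keys q"
    using keys_mult[of p q] by blast
  with m(2) keys_add[of a b] show "i \<in> mvars p \<union> mvars q"
    by (auto simp: mvars_def)
qed

lemma mvars_uminus [simp]: "mvars (- p) = mvars p"
  by (simp add: mvars_def keys_def)

lemma mvars_mVar [simp]: "mvars (mVar i :: 'a::comm_ring_1 mpoly) = {i}"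
  by (simp add: mvars_def mVar_def)

lemma mvars_mConst [simp]: "mvars (mConst c) = {}"
  by (simp add: mvars_def mConst_def)

lemma mvars_0 [simp]: "mvars 0 = {}"
  by (simp add: mvars_def)

lemma mvars_1 [simp]: "mvars 1 = {}"
  by (simp add: mvars_def)

lemma semiring_closed_mvars_subset: "semiring_closed {p :: 'a::comm_ring_1 mpoly. mvars p \<subseteq> V}"
proof -
  have "mvars (p + q) \<subseteq> V" "mvars (p * q) \<subseteq> V"
    if "mvars p \<subseteq> V" "mvars q \<subseteq> V" for p q :: "'a mpoly"
    using that mvars_add[of p q] mvars_mult[of p q] by blast+
  then show ?thesis
    by (simp add: semiring_closed_def)
qed

lemma mvars_add_subset: "mvars p \<subseteq> V \<Longrightarrow> mvars q \<subseteq> V \<Longrightarrow> mvars (p + q) \<subseteq> V"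
  using mvars_add by blast

lemma mvars_mult_subset: "mvars p \<subseteq> V \<Longrightarrow> mvars q \<subseteq> V \<Longrightarrow> mvars (p * q) \<subseteq> V"
  using mvars_mult by blast

lemma mvars_diff_subset:
  "mvars p \<subseteq> V \<Longrightarrow> mvars q \<subseteq> V \<Longrightarrow> mvars (p - q :: 'a::comm_ring_1 mpoly) \<subseteq> V"
  using mvars_add[of p "- q"] by auto

lemma mvars_uminus_subset: "mvars p \<subseteq> V \<Longrightarrow> mvars (- p :: 'a::comm_ring_1 mpoly) \<subseteq> V"
  by simp

lemma mvars_power_subset: "mvars p \<subseteq> V \<Longrightarrow> mvars (p ^ n :: 'a::comm_ring_1 mpoly) \<subseteq> V"
  using semiring_closed_power[OF semiring_closed_mvars_subset] by blast

lemma mvars_numeral_subset: "mvars (numeral k :: 'a::comm_ring_1 mpoly) \<subseteq> V"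
  using mConst.hom_numeral[of k] mvars_mConst by (metis empty_subsetI)

lemmas mvars_subset_intros = mvars_add_subset mvars_mult_subset mvars_diff_subset
  mvars_uminus_subset mvars_power_subset mvars_numeral_subset

section \<open>Polynomials vanishing on an infinite domain\<close>

lemma poly_eq_if_eq_off_zero:
  fixes p q :: "'k::idom poly"
  assumes "infinite (UNIV :: 'k set)" "\<And>u. u \<noteq> 0 \<Longrightarrow> poly p u = poly q u"
  shows "p = q"
proof -
  have "infinite (UNIV - {0 :: 'k})" using assms(1) by simp
  moreover have "UNIV - {0} \<subseteq> {u. poly (p - q) u = 0}" using assms(2) by auto
  ultimately have "infinite {u. poly (p - q) u = 0}" using finite_subset by blast
  then have "p - q = 0"
    using poly_roots_finite by blast
  then show ?thesis
    by simp
qed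

lemma infinite_UNIV_alg_closed: "infinite (UNIV :: 'k::alg_closed_field set)"
proof
  assume fin: "finite (UNIV :: 'k set)"
  define q :: "'k poly" where "q = (\<Prod>a\<in>UNIV. [:- a, 1:]) + 1"
  have "degree (\<Prod>a\<in>(UNIV :: 'k set). [:- a, 1:]) = card (UNIV :: 'k set)"
    by (subst degree_prod_eq_sum_degree) (simp_all add: fin)
  moreover have "card (UNIV :: 'k set) > 0" using fin by (simp add: card_gt_0_iff)
  ultimately have "degree q > 0" by (simp add: q_def degree_add_eq_left)
  then obtain x where "poly q x = 0" using alg_closed_imp_poly_has_root by blast
  moreover have "poly (\<Prod>a\<in>(UNIV :: 'k set). [:- a, 1:]) x = 0"
    by (simp add: poly_prod fin)
  ultimately show False by (simp add: q_def)
qed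

lemma mpoly_as_poly_last_var:
  fixes p :: "'k::comm_ring_1 mpoly"
  assumes p: "mvars p \<subseteq> {..<Suc n}"
  obtains P :: "'k mpoly poly"
  where "poly P (mVar n) = p" "\<And>j. mvars (coeff P j) \<subseteq> {..<n}"
    "\<And>x u. poly (map_poly (meval x) P) u = meval (x(n := u)) p"
proof
  define Y where "Y j = (if j = n then [:0, 1:] else [:mVar j :: 'k mpoly:])" for j
  define P where "P = minsert (\<lambda>c. [:mConst c:]) Y p"
  note poly_hom = comm_ring_hom.hom_minsert[OF comm_ring_hom_poly]
  show "poly P (mVar n) = p"
    unfolding P_def poly_hom
    by (subst minsert_cong[where w = mVar]) (simp_all add: Y_def)
  let ?R = "{q :: 'k mpoly poly. \<forall>j. mvars (coeff q j) \<subseteq> {..<n}}"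
  have "semiring_closed ?R"
    unfolding semiring_closed_def
  proof (intro conjI ballI CollectI allI)
    fix a b j assume "a \<in> ?R" "b \<in> ?R"
    then show "mvars (coeff (a + b) j) \<subseteq> {..<n}" "mvars (coeff (a * b) j) \<subseteq> {..<n}"
      unfolding coeff_add coeff_mult
      by (simp_all add: mvars_add_subset mvars_mult_subset
          semiring_closed_sum[OF semiring_closed_mvars_subset, simplified])
  qed (simp_all add: coeff_1)
  then have "P \<in> ?R"
    unfolding P_def
    by (rule minsert_mem) (use p in \<open>auto simp: Y_def coeff_pCons split: nat.split\<close>)
  then show "mvars (coeff P j) \<subseteq> {..<n}" for j by simp
  fix x :: "nat \<Rightarrow> 'k" and u :: 'k
  interpret ev: comm_ring_hom "meval x"
    by (rule comm_ring_hom_meval)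
  have map_ev: "map_poly (meval x) [:c:] = [:meval x c:]" for c
    by (simp add: map_poly_pCons ev.hom_zero)
  have "poly (map_poly (meval x) P) u
      = meval (\<lambda>j. poly (map_poly (meval x) (Y j)) u) p"
    unfolding P_def comm_ring_hom.hom_minsert[OF comm_ring_hom_map_poly[OF ev.comm_ring_hom_axioms]]
      poly_hom
    by (simp add: map_ev)
  also have "\<dots> = meval (x(n := u)) p"
    by (rule minsert_cong) (simp add: Y_def map_poly_pCons ev.hom_zero ev.hom_one)
  finally show "poly (map_poly (meval x) P) u = meval (x(n := u)) p" .
qed

lemma mpoly_eq_0_if_meval_eq_0:
  fixes p :: "'k::idom mpoly"
  assumes inf: "infinite (UNIV :: 'k set)" and zero: "\<And>x. meval x p = 0"
  shows "p = 0"
proof -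
  obtain n where "mvars p \<subseteq> {..<n}"
    using finite_nat_iff_bounded[of "mvars p"] by (auto simp: mvars_def)
  then show ?thesis
    using zero
  proof (induction n arbitrary: p)
    case 0
    then have keys: "Poly_Mapping.keys p \<subseteq> {0}"
      by (auto simp: mvars_def)
    then have "Poly_Mapping.lookup p 0 = meval (\<lambda>_. 0) p"
      by (simp add: minsert_superset[OF _ _ keys] monom_eval_def)
    then show "p = 0"
      using keys "0.prems"(2) by (intro poly_mapping_eqI) (auto simp: in_keys_iff)
  next
    case (Suc n)
    obtain P where P: "poly P (mVar n) = p" "\<And>j. mvars (coeff P j) \<subseteq> {..<n}"
      "\<And>x u. poly (map_poly (meval x) P) u = meval (x(n := u)) p"
      using mpoly_as_poly_last_var[OF Suc.prems(1)] by blast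
    have "map_poly (meval x) P = 0" for x
      by (rule poly_eq_if_eq_off_zero[OF inf]) (simp add: P(3) Suc.prems(2))
    then have "meval x (coeff P j) = 0" for x j
      by (metis coeff_0 coeff_map_poly minsert_zero)
    then have "coeff P j = 0" for j
      using Suc.IH[OF P(2)] by blast
    then have "P = 0"
      by (simp add: poly_eq_iff)
    with P(1) show "p = 0"
      by simp
  qed
qed

lemma mpoly_eq_0_if_eval_eq_0:
  fixes p :: "'a::field mpoly" and h :: "'a \<Rightarrow> 'b::field"
  assumes "comm_ring_hom h" "infinite (UNIV :: 'b set)" "\<And>x. minsert h x p = 0"
  shows "p = 0"
proof -
  interpret comm_ring_hom h by fact
  have "meval x (minsert (\<lambda>c. mConst (h c)) mVar p) = minsert h x p" for x
    by (simp add: comm_ring_hom.hom_minsert[OF comm_ring_hom_meval])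
  then have "minsert (\<lambda>c. mConst (h c)) mVar p = 0"
    using assms(2,3) by (intro mpoly_eq_0_if_meval_eq_0) simp_all
  then show "p = 0"
    using comm_ring_hom_inj[OF assms(1)] by (simp add: minsert_mConst_mVar_eq_0_iff hom_zero)
qed

section \<open>A membership criterion for \<open>K[A, D]\<close>\<close>

lemma alg_gen_eq_image:
  "alg_gen gs = minsert mConst (\<lambda>i. if i < length gs then gs ! i else 0) ` {P. mvars P \<subseteq> {..<length gs}}"
  by (auto simp: alg_gen_def)

lemma semiring_closed_alg_gen: "semiring_closed (alg_gen gs)"
  unfolding alg_gen_eq_image
  by (intro semiring_closed_image mConst.comm_ring_hom_minsert semiring_closed_mvars_subset)

lemma mConst_mem_alg_gen: "mConst c \<in> alg_gen gs"
  unfolding alg_gen_eq_image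
  by (rule image_eqI[where x = "mConst c"]) (simp_all add: mConst.minsert_mConst)

lemma nth_mem_alg_gen: "i < length gs \<Longrightarrow> gs ! i \<in> alg_gen gs"
  unfolding alg_gen_eq_image
  by (rule image_eqI[where x = "mVar i"]) (simp_all add: mConst.minsert_mVar)

lemma power_divide_shift:
  fixes u y :: "'k::field"
  assumes "u \<noteq> 0" "n + k * b = N + a"
  shows "u ^ N * (u ^ a * (y / u ^ k) ^ b) = u ^ n * y ^ b"
proof -
  have "(y / u ^ k) ^ b = y ^ b / u ^ (k * b)"
    by (simp add: power_divide power_mult)
  then have "u ^ N * (u ^ a * (y / u ^ k) ^ b) = u ^ (N + a) * y ^ b / u ^ (k * b)"
    by (simp add: power_add mult_ac)
  also have "\<dots> = u ^ n * u ^ (k * b) * y ^ b / u ^ (k * b)"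
    by (simp add: assms(2)[symmetric] power_add)
  finally show ?thesis
    using assms(1) by simp
qed

lemma coeff_eq_0_if_sum_powers_eq_0:
  fixes c :: "'m \<Rightarrow> 'k::idom" and b :: "'m \<Rightarrow> nat"
  assumes inf: "infinite (UNIV :: 'k set)" and "finite M" "inj_on b M"
    and zero: "\<And>z. (\<Sum>m\<in>M. c m * z ^ b m) = 0" and "m0 \<in> M"
  shows "c m0 = 0"
proof -
  define R where "R = (\<Sum>m\<in>M. monom (c m) (b m))"
  have "R = 0"
    using poly_eq_if_eq_off_zero[OF inf, of R 0] zero by (simp add: R_def poly_sum poly_monom)
  have "coeff R (b m0) = (\<Sum>m\<in>M. if m = m0 then c m else 0)"
  proof (unfold R_def coeff_sum coeff_monom, intro sum.cong refl)
    fix m assume "m \<in> M"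
    then have "b m = b m0 \<longleftrightarrow> m = m0"
      using inj_onD[OF \<open>inj_on b M\<close>, of m m0] \<open>m0 \<in> M\<close> by auto
    then show "(if b m = b m0 then c m else 0) = (if m = m0 then c m else 0)"
      by simp
  qed
  also have "\<dots> = c m0"
    using \<open>finite M\<close> \<open>m0 \<in> M\<close> by simp
  finally show ?thesis
    using \<open>R = 0\<close> by simp
qed

text \<open>If a Laurent polynomial \<open>\<Sum> c\<^sub>m u\<^bsup>a\<^sub>m\<^esup> (e / u\<^sup>k)\<^bsup>b\<^sub>m\<^esup>\<close> stays polynomial in \<open>u\<close>
  along curves \<open>e = E(u)\<close> whose value \<open>E(0)\<close> is arbitrary, then it has no negative powers
  of \<open>u\<close>: multiplying by the largest pole order \<open>u\<^sup>N\<close> and putting \<open>u = 0\<close> leaves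
  a nonzero polynomial in \<open>E(0)\<close>.\<close>

lemma laurent_exponents_nonneg:
  fixes c :: "'m \<Rightarrow> 'k::field" and a b :: "'m \<Rightarrow> nat"
  assumes inf: "infinite (UNIV :: 'k set)" and fin: "finite S"
    and inj: "inj_on (\<lambda>m. (a m, b m)) S" and nz: "\<And>m. m \<in> S \<Longrightarrow> c m \<noteq> 0"
    and curves: "\<And>z. \<exists>P E. poly E 0 = z \<and> (\<forall>u. u \<noteq> 0 \<longrightarrow>
                    poly P u = (\<Sum>m\<in>S. c m * u ^ a m * (poly E u / u ^ k) ^ b m))"
    and "m \<in> S"
  shows "k * b m \<le> a m"
proof (rule ccontr)
  assume neg: "\<not> k * b m \<le> a m"
  define N where "N = Max ((\<lambda>m. k * b m - a m) ` S)"
  define M where "M = {m \<in> S. a m + N = k * b m}"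
  define e where "e m = a m + N - k * b m" for m
  have le_N: "k * b m - a m \<le> N" if "m \<in> S" for m
    using fin that by (simp add: N_def)
  have "N > 0" using le_N[OF \<open>m \<in> S\<close>] neg by linarith
  have "N \<in> (\<lambda>m. k * b m - a m) ` S"
    unfolding N_def using fin \<open>m \<in> S\<close> by (intro Max_in) auto
  then obtain m0 where m0: "m0 \<in> S" "k * b m0 - a m0 = N"
    by auto
  then have "m0 \<in> M" using \<open>N > 0\<close> by (simp add: M_def)
  have e: "e m + k * b m = N + a m" if "m \<in> S" for m
    using le_N[OF that] by (simp add: e_def)
  have e_eq_0: "e m = 0 \<longleftrightarrow> m \<in> M" if "m \<in> S" for m
    using le_N[OF that] that by (auto simp: e_def M_def)
  have lowest: "(\<Sum>m\<in>M. c m * z ^ b m) = 0" for z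
  proof -
    obtain P E where E0: "poly E 0 = z" and PE: "\<And>u. u \<noteq> 0 \<Longrightarrow>
        poly P u = (\<Sum>m\<in>S. c m * u ^ a m * (poly E u / u ^ k) ^ b m)"
      using curves by blast
    define Q where "Q = (\<Sum>m\<in>S. smult (c m) (monom 1 (e m) * E ^ b m))"
    have "monom 1 N * P = Q"
    proof (rule poly_eq_if_eq_off_zero[OF inf])
      fix u :: 'k assume u: "u \<noteq> 0"
      have "poly (monom 1 N * P) u = (\<Sum>m\<in>S. c m * (u ^ N * (u ^ a m * (poly E u / u ^ k) ^ b m)))"
        using PE[OF u] by (simp add: poly_monom sum_distrib_left mult_ac)
      also have "\<dots> = (\<Sum>m\<in>S. c m * (u ^ e m * poly E u ^ b m))"
        by (intro sum.cong refl) (simp add: power_divide_shift[OF u e])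
      finally show "poly (monom 1 N * P) u = poly Q u"
        by (simp add: Q_def poly_sum poly_monom)
    qed
    have "(\<Sum>m\<in>M. c m * z ^ b m) = (\<Sum>m\<in>M. c m * (0 ^ e m * z ^ b m))"
      by (intro sum.cong refl) (simp add: M_def e_def)
    also have "\<dots> = (\<Sum>m\<in>S. c m * (0 ^ e m * z ^ b m))"
      using fin e_eq_0 by (intro sum.mono_neutral_left) (auto simp: M_def)
    also have "\<dots> = poly Q 0"
      by (simp add: Q_def poly_sum poly_monom E0)
    also have "\<dots> = 0"
      unfolding \<open>monom 1 N * P = Q\<close>[symmetric] using \<open>N > 0\<close> by (simp add: poly_monom)
    finally show ?thesis .
  qed
  have "inj_on b M"
  proof (rule inj_onI)
    fix m m' assume "m \<in> M" "m' \<in> M" "b m = b m'"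
    then show "m = m'"
      using inj_onD[OF inj, of m m'] by (auto simp: M_def)
  qed
  moreover have "finite M"
    using fin by (simp add: M_def)
  ultimately have "c m0 = 0"
    using coeff_eq_0_if_sum_powers_eq_0[OF inf _ _ lowest \<open>m0 \<in> M\<close>] by blast
  then show False
    using nz[OF m0(1)] by simp
qed

lemma minsert_bivariate:
  assumes "mvars H \<subseteq> {0, 1}"
  shows "minsert f v H = (\<Sum>m\<in>Poly_Mapping.keys H.
    f (Poly_Mapping.lookup H m) * v 0 ^ Poly_Mapping.lookup m 0 * v 1 ^ Poly_Mapping.lookup m 1)"
  unfolding minsert_eq_monom_eval
proof (intro sum.cong refl)
  fix m assume "m \<in> Poly_Mapping.keys H"
  then have "Poly_Mapping.keys m \<subseteq> {0, 1}"
    using assms by (auto simp: mvars_def)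
  then show "f (Poly_Mapping.lookup H m) * monom_eval v m
      = f (Poly_Mapping.lookup H m) * v 0 ^ Poly_Mapping.lookup m 0 * v 1 ^ Poly_Mapping.lookup m 1"
    by (simp add: monom_eval_superset[of "{0, 1}"] mult.assoc)
qed

lemma inj_on_bivariate_exponents:
  assumes "mvars H \<subseteq> {0, 1}"
  shows "inj_on (\<lambda>m. (Poly_Mapping.lookup m 0, Poly_Mapping.lookup m 1)) (Poly_Mapping.keys H)"
proof (rule inj_onI)
  fix m m' assume m: "m \<in> Poly_Mapping.keys H" "m' \<in> Poly_Mapping.keys H"
    and eq: "(Poly_Mapping.lookup m 0, Poly_Mapping.lookup m 1)
      = (Poly_Mapping.lookup m' 0, Poly_Mapping.lookup m' 1)"
  have "Poly_Mapping.keys m \<subseteq> {0, 1}" "Poly_Mapping.keys m' \<subseteq> {0, 1}"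
    using m assms by (auto simp: mvars_def)
  then show "m = m'"
    using eq by (intro poly_mapping_eqI) (metis in_keys_iff insert_iff old.prod.inject singletonD subsetD)
qed

lemma mem_alg_gen_if_eval_eq:
  fixes h :: "'a::field \<Rightarrow> 'b::field" and F A D :: "'a mpoly"
    and c :: "'m \<Rightarrow> 'a" and a b :: "'m \<Rightarrow> nat"
  assumes h: "comm_ring_hom h" and inf: "infinite (UNIV :: 'b set)" and "A \<noteq> 0"
    and weights: "\<And>m. m \<in> S \<Longrightarrow> k * b m \<le> a m"
    and F_eq: "\<And>x. minsert h x A \<noteq> 0 \<Longrightarrow> minsert h x F
      = (\<Sum>m\<in>S. h (c m) * minsert h x A ^ a m * (minsert h x D / minsert h x A ^ k) ^ b m)"
  shows "F \<in> alg_gen [A, D]"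
proof -
  interpret comm_ring_hom h by fact
  define F' where "F' = (\<Sum>m\<in>S. mConst (c m) * A ^ (a m - k * b m) * D ^ b m)"
  have "F' \<in> alg_gen [A, D]"
    unfolding F'_def
    using nth_mem_alg_gen[of 0 "[A, D]"] nth_mem_alg_gen[of 1 "[A, D]"]
    by (intro semiring_closed_sum semiring_closed_mult semiring_closed_power semiring_closed_alg_gen
        mConst_mem_alg_gen) simp_all
  have "minsert h x (A * (F - F')) = 0" for x
  proof (cases "minsert h x A = 0")
    case False
    have "minsert h x F = minsert h x F'"
      unfolding F_eq[OF False] F'_def minsert_sum
    proof (intro sum.cong refl)
      fix m assume "m \<in> S"
      then have "a m - k * b m + k * b m = 0 + a m" using weights by simp
      from power_divide_shift[OF False this]
      show "h (c m) * minsert h x A ^ a m * (minsert h x D / minsert h x A ^ k) ^ b m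
          = minsert h x (mConst (c m) * A ^ (a m - k * b m) * D ^ b m)"
        by (simp add: minsert_mult minsert_mConst comm_ring_hom.hom_power[OF comm_ring_hom_minsert]
            mult_ac)
    qed
    then show ?thesis
      by (simp add: minsert_mult comm_ring_hom.hom_diff[OF comm_ring_hom_minsert])
  qed (simp add: minsert_mult)
  then have "A * (F - F') = 0"
    by (rule mpoly_eq_0_if_eval_eq_0[OF h inf])
  then show ?thesis
    using \<open>A \<noteq> 0\<close> \<open>F' \<in> alg_gen [A, D]\<close> by simp
qed

text \<open>The normal-form hypothesis says that \<open>F = H(A, D / A\<^sup>k)\<close> wherever \<open>A \<noteq> 0\<close>, with
  \<open>H(u, e) = F(N(u, e))\<close>.\<close>

lemma mem_alg_gen_if_normal_form:
  fixes h :: "'a::field \<Rightarrow> 'b::field" and F A D :: "'a mpoly" and N :: "nat \<Rightarrow> 'a mpoly"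
  assumes h: "comm_ring_hom h" and inf: "infinite (UNIV :: 'b set)"
    and "A \<noteq> 0" and N: "\<And>l. mvars (N l) \<subseteq> {0, 1}"
    and normal_form: "\<And>x. minsert h x A \<noteq> 0 \<Longrightarrow> minsert h x F = minsert h
      (\<lambda>l. minsert h (\<lambda>i. if i = 0 then minsert h x A else minsert h x D / minsert h x A ^ k) (N l)) F"
    and curves: "\<And>z. \<exists>Y. (\<forall>u. minsert h (\<lambda>l. poly (Y l) u) A = u)
                        \<and> minsert h (\<lambda>l. poly (Y l) 0) D = z"
  shows "F \<in> alg_gen [A, D]"
proof -
  interpret comm_ring_hom h by fact
  define H where "H = minsert mConst N F"
  define S where "S = Poly_Mapping.keys H"
  define c where "c m = Poly_Mapping.lookup H m" for m
  define a where "a m = Poly_Mapping.lookup m 0" for m :: "nat \<Rightarrow>\<^sub>0 nat"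
  define b where "b m = Poly_Mapping.lookup m 1" for m :: "nat \<Rightarrow>\<^sub>0 nat"
  have "H \<in> {p. mvars p \<subseteq> {0, 1}}"
    unfolding H_def by (rule minsert_mem[OF semiring_closed_mvars_subset]) (simp_all add: N[simplified])
  then have H: "mvars H \<subseteq> {0, 1}"
    by simp
  have H_eval: "minsert h v H = (\<Sum>m\<in>S. h (c m) * v 0 ^ a m * v 1 ^ b m)" for v
    using H by (simp add: minsert_bivariate S_def a_def b_def c_def)
  have F_eq: "minsert h x F
      = (\<Sum>m\<in>S. h (c m) * minsert h x A ^ a m * (minsert h x D / minsert h x A ^ k) ^ b m)"
    if "minsert h x A \<noteq> 0" for x
    using normal_form[OF that] H_eval minsert_minsert[OF h] by (simp add: H_def)
  have inj: "inj_on (\<lambda>m. (a m, b m)) S"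
    unfolding S_def a_def b_def by (rule inj_on_bivariate_exponents[OF H])
  have "k * b m \<le> a m" if "m \<in> S" for m
  proof (rule laurent_exponents_nonneg[OF inf _ inj _ _ that])
    show "finite S" by (simp add: S_def)
    show "h (c m) \<noteq> 0" if "m \<in> S" for m
      using that comm_ring_hom_inj[OF h] by (simp add: S_def c_def in_keys_iff inj_eq flip: hom_zero)
  next
    fix z
    obtain Y where YA: "\<And>u. minsert h (\<lambda>l. poly (Y l) u) A = u"
      and YD: "minsert h (\<lambda>l. poly (Y l) 0) D = z"
      using curves by blast
    have on_curve: "poly (minsert (\<lambda>c. [:h c:]) Y G) u = minsert h (\<lambda>l. poly (Y l) u) G" for G u
      by (simp add: comm_ring_hom.hom_minsert[OF comm_ring_hom_poly])
    show "\<exists>P E. poly E 0 = z \<and> (\<forall>u. u \<noteq> 0 \<longrightarrow>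
        poly P u = (\<Sum>m\<in>S. h (c m) * u ^ a m * (poly E u / u ^ k) ^ b m))"
      by (rule exI[of _ "minsert (\<lambda>c. [:h c:]) Y F"], rule exI[of _ "minsert (\<lambda>c. [:h c:]) Y D"])
        (simp add: on_curve YA YD F_eq)
  qed
  then show ?thesis
    using mem_alg_gen_if_eval_eq[OF h inf \<open>A \<noteq> 0\<close>] F_eq by blast
qed

section \<open>The discriminant and the action of \<open>G\<^sub>1\<close>\<close>

definition disc :: "(nat \<Rightarrow> 'a::comm_ring_1) \<Rightarrow> 'a" where
  "disc x =
    (let b2 = x 0 ^ 2 + 4 * x 1; b4 = 2 * x 3 + x 0 * x 2; b6 = x 2 ^ 2 + 4 * x 4;
         b8 = x 0 ^ 2 * x 4 + 4 * x 1 * x 4 - x 0 * x 2 * x 3 + x 1 * x 2 ^ 2 - x 3 ^ 2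
     in - (b2 ^ 2 * b8) - 8 * b4 ^ 3 - 27 * b6 ^ 2 + 9 * b2 * b4 * b6)"

definition subst_coeffs :: "'a \<Rightarrow> 'a \<Rightarrow> 'a \<Rightarrow> (nat \<Rightarrow> 'a) \<Rightarrow> nat \<Rightarrow> 'a::comm_ring_1" where
  "subst_coeffs r s t x i =
    (if i = 0 then x 0 + 2 * s
     else if i = 1 then x 1 - s * x 0 + 3 * r - s ^ 2
     else if i = 2 then x 2 + r * x 0 + 2 * t
     else if i = 3 then x 3 - s * x 2 + 2 * r * x 1 - (t + r * s) * x 0 + 3 * r ^ 2 - 2 * s * t
     else if i = 4 then x 4 + r * x 3 + r ^ 2 * x 1 + r ^ 3 - t * x 2 - t ^ 2 - r * t * x 0
     else x i)"

lemma disc_subst_coeffs: "disc (subst_coeffs r s t x) = disc x"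
  unfolding disc_def subst_coeffs_def Let_def
  by (simp add: algebra_simps power2_eq_square power3_eq_cube)

lemma disc_a1_a6:
  "x 1 = 0 \<Longrightarrow> x 2 = 0 \<Longrightarrow> x 3 = 0 \<Longrightarrow> disc x = - (x 0 ^ 6 * x 4) - 432 * x 4 ^ 2"
  by (simp add: disc_def algebra_simps power2_eq_square power3_eq_cube) (simp add: eval_nat_numeral)

lemma disc_a2_a6:
  "x 0 = 0 \<Longrightarrow> x 2 = 0 \<Longrightarrow> x 3 = 0 \<Longrightarrow> disc x = - 64 * x 1 ^ 3 * x 4 - 432 * x 4 ^ 2"
  by (simp add: disc_def algebra_simps power2_eq_square power3_eq_cube)

lemma disc_a3: "x 0 = 0 \<Longrightarrow> x 1 = 0 \<Longrightarrow> x 3 = 0 \<Longrightarrow> x 4 = 0 \<Longrightarrow> disc x = - 27 * x 2 ^ 4"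
  by (simp add: disc_def algebra_simps power2_eq_square power3_eq_cube) (simp add: eval_nat_numeral)

lemma disc_a4: "x 0 = 0 \<Longrightarrow> x 1 = 0 \<Longrightarrow> x 2 = 0 \<Longrightarrow> x 4 = 0 \<Longrightarrow> disc x = - 64 * x 3 ^ 3"
  by (simp add: disc_def algebra_simps power2_eq_square power3_eq_cube)

lemma wDelta_eq_disc: "wDelta = disc mVar"
  by (simp add: disc_def Let_def wDelta_def wb2_def wb4_def wb6_def wb8_def
      wa1_def wa2_def wa3_def wa4_def wa6_def)

context comm_ring_hom
begin

lemma hom_disc: "hom (disc x) = disc (\<lambda>i. hom (x i))"
  by (simp add: disc_def Let_def hom_simps)

lemma hom_subst_coeffs: "hom (subst_coeffs r s t x i) = subst_coeffs (hom r) (hom s) (hom t) (\<lambda>i. hom (x i)) i"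
  by (simp add: subst_coeffs_def hom_simps)

lemma minsert_wa1: "minsert hom v wa1 = v 0"
  by (simp add: wa1_def minsert_mVar)

lemma minsert_wb2: "minsert hom v wb2 = v 0 ^ 2 + 4 * v 1"
  using comm_ring_hom.hom_simps[OF comm_ring_hom_minsert]
  by (simp add: wb2_def wa1_def wa2_def minsert_mVar)

lemma minsert_wDelta: "minsert hom v wDelta = disc v"
proof -
  interpret ev: comm_ring_hom "minsert hom v"
    by (rule comm_ring_hom_minsert)
  show ?thesis
    unfolding wDelta_eq_disc ev.hom_disc minsert_mVar by simp
qed

end

lemma numeral_eq_0_if_char_dvd: "CHAR('a::comm_ring_1) dvd numeral n \<Longrightarrow> (numeral n :: 'a) = 0"
  using of_nat_eq_0_iff_char_dvd[of "numeral n", where 'a = 'a] by simp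

interpretation ac_const: comm_ring_hom "\<lambda>c. mConst (to_ac c)"
  by (rule comm_ring_hom_comp[OF to_ac.comm_ring_hom_axioms mConst.comm_ring_hom_axioms])

lemma gsub_eq_subst_coeffs: "gsub r s t = subst_coeffs (mConst r) (mConst s) (mConst t) mVar"
  by (simp add: fun_eq_iff gsub_def subst_coeffs_def Let_def wa1_def wa2_def wa3_def wa4_def wa6_def)

lemma meval_gact: "meval x (gact r s t F) = minsert to_ac (subst_coeffs r s t x) F"
  by (simp add: gact_def gsub_eq_subst_coeffs comm_ring_hom.hom_minsert[OF comm_ring_hom_meval]
      comm_ring_hom.hom_subst_coeffs[OF comm_ring_hom_meval])

lemma meval_to_acp: "meval x (to_acp F) = minsert to_ac x F"
  by (simp add: to_acp_def comm_ring_hom.hom_minsert[OF comm_ring_hom_meval])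

lemma G1_invariant_eval_eq:
  assumes F: "F \<in> G1_invariants" and y: "\<And>l. l \<le> 4 \<Longrightarrow> subst_coeffs r s t x l = y l"
  shows "minsert to_ac x F = minsert to_ac y F"
proof -
  have "gact r s t F = to_acp F"
    using F by (simp add: G1_invariants_def)
  then have "minsert to_ac x F = minsert to_ac (subst_coeffs r s t x) F"
    by (metis meval_gact meval_to_acp)
  also have "\<dots> = minsert to_ac y F"
    using F y by (intro minsert_cong) (auto simp: G1_invariants_def KX1_def)
  finally show ?thesis .
qed

lemma comm_ring_hom_gact: "comm_ring_hom (gact r s t)"
proof -
  have "gact r s t = minsert (\<lambda>c. mConst (to_ac c)) (gsub r s t)"
    by (simp add: fun_eq_iff gact_def)
  then show ?thesis
    using ac_const.comm_ring_hom_minsert by metis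
qed

lemma comm_ring_hom_to_acp: "comm_ring_hom (to_acp :: 'a::field mpoly \<Rightarrow> _)"
proof -
  have "(to_acp :: 'a mpoly \<Rightarrow> _) = minsert (\<lambda>c. mConst (to_ac c)) mVar"
    by (simp add: fun_eq_iff to_acp_def)
  then show ?thesis
    using ac_const.comm_ring_hom_minsert by metis
qed

lemma semiring_closed_G1_invariants: "semiring_closed (G1_invariants :: 'a::field mpoly set)"
proof -
  have "F + G \<in> G1_invariants \<and> F * G \<in> G1_invariants"
    if "F \<in> G1_invariants" "G \<in> G1_invariants" for F G :: "'a mpoly"
    using that mvars_add_subset[of F "{0..4}" G] mvars_mult_subset[of F "{0..4}" G]
    by (simp add: G1_invariants_def KX1_def comm_ring_hom.hom_add[OF comm_ring_hom_gact]
        comm_ring_hom.hom_mult[OF comm_ring_hom_gact] comm_ring_hom.hom_add[OF comm_ring_hom_to_acp]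
        comm_ring_hom.hom_mult[OF comm_ring_hom_to_acp])
  moreover have "0 \<in> (G1_invariants :: 'a mpoly set)" "1 \<in> (G1_invariants :: 'a mpoly set)"
    by (simp_all add: G1_invariants_def KX1_def comm_ring_hom.hom_zero[OF comm_ring_hom_gact]
        comm_ring_hom.hom_one[OF comm_ring_hom_gact] comm_ring_hom.hom_zero[OF comm_ring_hom_to_acp]
        comm_ring_hom.hom_one[OF comm_ring_hom_to_acp])
  ultimately show ?thesis
    by (simp add: semiring_closed_def)
qed

lemma mConst_mem_G1_invariants: "mConst c \<in> G1_invariants"
  by (simp add: G1_invariants_def KX1_def gact_def to_acp_def ac_const.minsert_mConst)

lemma alg_gen_subset_G1_invariants:
  assumes "set gs \<subseteq> G1_invariants"
  shows "alg_gen gs \<subseteq> G1_invariants"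
proof
  fix F assume "F \<in> alg_gen gs"
  then obtain P where F: "F = minsert mConst (\<lambda>i. if i < length gs then gs ! i else 0) P"
    by (auto simp: alg_gen_def)
  have "(if i < length gs then gs ! i else 0) \<in> G1_invariants" for i
    using assms semiring_closed_G1_invariants by (auto simp: semiring_closed_def)
  then show "F \<in> G1_invariants"
    unfolding F by (intro minsert_mem semiring_closed_G1_invariants mConst_mem_G1_invariants)
qed

lemma wDelta_mem_G1_invariants: "wDelta \<in> G1_invariants"
proof -
  have "mvars (wDelta :: 'a::field mpoly) \<subseteq> {0..4}"
    unfolding wDelta_def wb2_def wb4_def wb6_def wb8_def wa1_def wa2_def wa3_def wa4_def wa6_def
    by (intro mvars_subset_intros; simp)
  moreover have "gact r s t wDelta = to_acp wDelta" for r s t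
    using disc_subst_coeffs[of "mConst r" "mConst s" "mConst t" mVar]
    by (simp add: gact_def to_acp_def ac_const.minsert_wDelta gsub_eq_subst_coeffs)
  ultimately show ?thesis
    unfolding G1_invariants_def KX1_def by blast
qed

lemma wa1_mem_G1_invariants:
  assumes "CHAR('a::field) = 2"
  shows "(wa1 :: 'a mpoly) \<in> G1_invariants"
proof -
  have two: "(2 :: 'a alg_closure) = 0"
    using assms by (simp add: numeral_eq_0_if_char_dvd)
  have "gact r s t (wa1 :: 'a mpoly) = to_acp wa1" for r s t
  proof -
    have "gact r s t wa1 = wa1 + 2 * mConst s"
      by (simp add: gact_def wa1_def ac_const.minsert_mVar gsub_def Let_def)
    also have "\<dots> = wa1 + mConst (2 * s)"
      by (simp add: mConst.hom_mult mConst.hom_numeral)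
    also have "\<dots> = to_acp wa1"
      using two by (simp add: mConst.hom_zero to_acp_def wa1_def ac_const.minsert_mVar)
    finally show ?thesis .
  qed
  then show ?thesis
    by (simp add: G1_invariants_def KX1_def wa1_def)
qed

lemma wb2_mem_G1_invariants:
  assumes "CHAR('a::field) = 3"
  shows "(wb2 :: 'a mpoly) \<in> G1_invariants"
proof -
  have twelve: "(12 :: 'a alg_closure) = 0"
    using assms by (simp add: numeral_eq_0_if_char_dvd)
  have "gact r s t (wb2 :: 'a mpoly) = to_acp wb2" for r s t
  proof -
    have "gact r s t wb2 = mVar 0 ^ 2 + 4 * mVar 1 + mConst (12 * r)"
      by (simp add: gact_def ac_const.minsert_wb2 gsub_def Let_def wa1_def wa2_def
          mConst.hom_mult mConst.hom_numeral algebra_simps power2_eq_square)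
    also have "\<dots> = to_acp wb2"
      using twelve by (simp add: mConst.hom_zero to_acp_def ac_const.minsert_wb2)
    finally show ?thesis .
  qed
  moreover have "mvars (wb2 :: 'a mpoly) \<subseteq> {0..4}"
    unfolding wb2_def wa1_def wa2_def by (intro mvars_subset_intros; simp)
  ultimately show ?thesis
    by (simp add: G1_invariants_def KX1_def)
qed

lemma wa1_neq_0: "(wa1 :: 'a::comm_ring_1 mpoly) \<noteq> 0"
  using comm_ring_hom.minsert_wa1[OF comm_ring_hom_id, of "\<lambda>_. 1 :: 'a"] by auto

lemma wb2_neq_0: "(wb2 :: 'a::comm_ring_1 mpoly) \<noteq> 0"
  using comm_ring_hom.minsert_wb2[OF comm_ring_hom_id, of "\<lambda>i. if i = 0 then 1 else 0 :: 'a"] by auto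

section \<open>Characteristic 2 and 3\<close>

lemma alg_closed_quadratic_root: "\<exists>s::'k::alg_closed_field. s ^ 2 + b * s + c = 0"
proof -
  obtain s where "poly [:c, b, 1:] s = (0::'k)"
    using alg_closed_imp_poly_has_root[of "[:c, b, 1:]"] by auto
  then have "s ^ 2 + b * s + c = 0"
    by (simp add: algebra_simps power2_eq_square)
  then show ?thesis ..
qed

lemma char2_normal_form:
  fixes x :: "nat \<Rightarrow> 'k::alg_closed_field"
  assumes char: "CHAR('k) = 2" and x0: "x 0 \<noteq> 0"
  obtains r s t where
    "\<And>l. l \<le> 4 \<Longrightarrow> subst_coeffs r s t x l = (if l = 0 then x 0 else if l = 4 then disc x / x 0 ^ 6 else 0)"
proof -
  have two: "(2 :: 'k) = 0"
    using char by (simp add: numeral_eq_0_if_char_dvd)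
  define r where "r = - x 2 / x 0"
  obtain s where s: "s ^ 2 + x 0 * s + - (x 1 + 3 * r) = 0"
    using alg_closed_quadratic_root by blast
  define t where "t = (x 3 - s * x 2 + 3 * r ^ 2 - r * s * x 0) / x 0"
  define y where "y = subst_coeffs r s t x"
  have y0: "y 0 = x 0"
    using two by (simp add: y_def subst_coeffs_def)
  have "y 1 = - (s ^ 2 + x 0 * s + - (x 1 + 3 * r))"
    by (simp add: y_def subst_coeffs_def algebra_simps)
  then have y1: "y 1 = 0"
    unfolding s by simp
  have "y 2 = (x 2 + r * x 0) + 2 * t"
    by (simp add: y_def subst_coeffs_def)
  then have y2: "y 2 = 0"
    using x0 two by (simp add: r_def)
  have "y 3 = (x 3 - s * x 2 + 3 * r ^ 2 - r * s * x 0 - t * x 0) + 2 * (r * x 1 - s * t)"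
    by (simp add: y_def subst_coeffs_def algebra_simps)
  then have y3: "y 3 = 0"
    using x0 two by (simp add: t_def)
  have "disc x = disc y"
    by (simp add: y_def disc_subst_coeffs)
  also have "\<dots> = x 0 ^ 6 * y 4 - 2 * (x 0 ^ 6 * y 4 + 216 * y 4 ^ 2)"
    using y0 y1 y2 y3 by (simp add: disc_a1_a6 algebra_simps)
  finally have y4: "y 4 = disc x / x 0 ^ 6"
    using x0 two by (simp add: field_simps)
  show ?thesis
    by (rule that) (use y0 y1 y2 y3 y4 in \<open>auto simp: y_def le_Suc_eq numeral_eq_Suc\<close>)
qed

lemma char3_normal_form:
  fixes x :: "nat \<Rightarrow> 'k::field"
  assumes char: "CHAR('k) = 3" and b: "x 0 ^ 2 + 4 * x 1 \<noteq> 0"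
  obtains r s t where
    "\<And>l. l \<le> 4 \<Longrightarrow> subst_coeffs r s t x l = (if l = 1 then x 0 ^ 2 + 4 * x 1
       else if l = 4 then - (disc x / (x 0 ^ 2 + 4 * x 1) ^ 3) else 0)"
proof -
  define b where "b = x 0 ^ 2 + 4 * x 1"
  have three: "(3 :: 'k) = 0" and twelve: "(12 :: 'k) = 0"
    and c63: "(63 :: 'k) = 0" and c432: "(432 :: 'k) = 0"
    using char by (simp_all add: numeral_eq_0_if_char_dvd)
  have four: "(4 :: 'k) = 1"
    using of_nat_eq_iff_char_dvd[of 1 4, where 'a = 'k] char by simp
  have two: "(2 :: 'k) \<noteq> 0"
    using of_nat_eq_0_iff_char_dvd[of 2, where 'a = 'k] char by simp
  define s where "s = - x 0 / 2"
  define q where "q = 2 * x 1 - s * x 0"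
  define r where "r = - (x 3 - s * x 2) / q"
  define t where "t = - (x 2 + r * x 0) / 2"
  define y where "y = subst_coeffs r s t x"
  have s2: "2 * s = - x 0"
    using two by (simp add: s_def)
  have "2 * q = 4 * x 1 - (2 * s) * x 0"
    by (simp add: q_def algebra_simps)
  then have "2 * q = b"
    by (simp add: s2 b_def power2_eq_square)
  then have "q \<noteq> 0"
    using b by (auto simp: b_def)
  then have rq: "r * q = - (x 3 - s * x 2)"
    by (simp add: r_def)
  have t2: "2 * t = - (x 2 + r * x 0)"
    using two by (simp add: t_def)
  have y0: "y 0 = 0"
    using s2 by (simp add: y_def subst_coeffs_def)
  have "4 * y 1 = b + 12 * r - (x 0 + 2 * s) ^ 2"
    by (simp add: y_def subst_coeffs_def b_def algebra_simps power2_eq_square)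
  then have y1: "y 1 = b"
    using s2 four twelve by simp
  have "y 2 = (x 2 + r * x 0) + 2 * t"
    by (simp add: y_def subst_coeffs_def)
  then have y2: "y 2 = 0"
    using t2 by simp
  have "y 3 = (x 3 - s * x 2 + r * q) - t * (x 0 + 2 * s) + 3 * r ^ 2"
    by (simp add: y_def subst_coeffs_def q_def algebra_simps)
  then have y3: "y 3 = 0"
    using rq s2 three by simp
  have "disc x = disc y"
    by (simp add: y_def disc_subst_coeffs)
  also have "\<dots> = - (b ^ 3 * y 4) - 63 * (b ^ 3 * y 4) - 432 * y 4 ^ 2"
    using y0 y1 y2 y3 by (simp add: disc_a2_a6 algebra_simps)
  finally have y4: "y 4 = - (disc x / b ^ 3)"
    using b c63 c432 by (simp add: b_def field_simps)
  show ?thesis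
    by (rule that) (use y0 y1 y2 y3 y4 in \<open>auto simp: y_def b_def le_Suc_eq numeral_eq_Suc\<close>)
qed

lemma G1_invariant_eval_char2:
  fixes F :: "'a::field mpoly"
  assumes "CHAR('a) = 2" "F \<in> G1_invariants" "x 0 \<noteq> 0"
  shows "minsert to_ac x F
    = minsert to_ac (\<lambda>l. if l = 0 then x 0 else if l = 4 then disc x / x 0 ^ 6 else 0) F"
proof -
  have "CHAR('a alg_closure) = 2"
    using assms(1) by simp
  then obtain r s t where "\<And>l. l \<le> 4 \<Longrightarrow>
      subst_coeffs r s t x l = (if l = 0 then x 0 else if l = 4 then disc x / x 0 ^ 6 else 0)"
    using char2_normal_form assms(3) by blast
  then show ?thesis
    by (rule G1_invariant_eval_eq[OF assms(2)])
qed

lemma G1_invariant_eval_char3: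
  fixes F :: "'a::field mpoly"
  assumes "CHAR('a) = 3" "F \<in> G1_invariants" "x 0 ^ 2 + 4 * x 1 \<noteq> 0"
  shows "minsert to_ac x F = minsert to_ac (\<lambda>l. if l = 1 then x 0 ^ 2 + 4 * x 1
    else if l = 4 then - (disc x / (x 0 ^ 2 + 4 * x 1) ^ 3) else 0) F"
proof -
  have "CHAR('a alg_closure) = 3"
    using assms(1) by simp
  then obtain r s t where "\<And>l. l \<le> 4 \<Longrightarrow> subst_coeffs r s t x l = (if l = 1 then
      x 0 ^ 2 + 4 * x 1 else if l = 4 then - (disc x / (x 0 ^ 2 + 4 * x 1) ^ 3) else 0)"
    using char3_normal_form assms(3) by blast
  then show ?thesis
    by (rule G1_invariant_eval_eq[OF assms(2)])
qed

lemma wa1_wDelta_curve: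
  assumes "CHAR('a::field) = 2"
  shows "\<exists>Y. (\<forall>u. minsert to_ac (\<lambda>l. poly (Y l) u) (wa1 :: 'a mpoly) = u)
    \<and> minsert to_ac (\<lambda>l. poly (Y l) 0) (wDelta :: 'a mpoly) = z"
proof -
  obtain w where w: "w ^ 4 = z"
    using nth_root_exists[of 4 z] by auto
  have "(28 :: 'a alg_closure) = 0"
    using assms by (simp add: numeral_eq_0_if_char_dvd)
  have "- 27 * w ^ 4 = z - 28 * z"
    using w by simp
  also have "\<dots> = z"
    using \<open>(28 :: 'a alg_closure) = 0\<close> by simp
  finally have "- 27 * w ^ 4 = z" .
  then show ?thesis
    by (intro exI[of _ "\<lambda>l. if l = 0 then [:0, 1:] else if l = 2 then [:w:] else 0"])
      (simp add: to_ac.minsert_wa1 to_ac.minsert_wDelta disc_a3)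
qed

lemma wb2_wDelta_curve:
  assumes "CHAR('a::field) = 3"
  shows "\<exists>Y. (\<forall>u. minsert to_ac (\<lambda>l. poly (Y l) u) (wb2 :: 'a mpoly) = u)
    \<and> minsert to_ac (\<lambda>l. poly (Y l) 0) (wDelta :: 'a mpoly) = z"
proof -
  obtain w where w: "w ^ 3 = - z"
    using nth_root_exists[of 3 "- z"] by auto
  have "(63 :: 'a alg_closure) = 0"
    using assms by (simp add: numeral_eq_0_if_char_dvd)
  have four: "(4 :: 'a alg_closure) = 1"
    using of_nat_eq_iff_char_dvd[of 1 4, where 'a = "'a alg_closure"] assms by simp
  have "- 64 * w ^ 3 = 63 * z + z"
    using w by simp
  also have "\<dots> = z"
    using \<open>(63 :: 'a alg_closure) = 0\<close> by simp
  finally have "- 64 * w ^ 3 = z" .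
  then show ?thesis
    by (intro exI[of _ "\<lambda>l. if l = 1 then [:0, 1:] else if l = 3 then [:w:] else 0"])
      (simp add: to_ac.minsert_wb2 to_ac.minsert_wDelta disc_a4 four)
qed

lemma G1_invariants_subset_char2:
  assumes "CHAR('a::field) = 2"
  shows "G1_invariants \<subseteq> alg_gen [wa1, wDelta :: 'a mpoly]"
proof
  fix F :: "'a mpoly" assume F: "F \<in> G1_invariants"
  define N :: "nat \<Rightarrow> 'a mpoly" where "N l = (if l = 0 then mVar 0 else if l = 4 then mVar 1 else 0)" for l
  have N_eval: "minsert to_ac v (N l) = (if l = 0 then v 0 else if l = 4 then v 1 else 0)" for v l
    by (simp add: N_def to_ac.minsert_mVar)
  show "F \<in> alg_gen [wa1, wDelta]"
  proof (rule mem_alg_gen_if_normal_form[where h = to_ac and k = 6 and N = N])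
    show "comm_ring_hom to_ac" "infinite (UNIV :: 'a alg_closure set)"
      by (simp_all add: to_ac.comm_ring_hom_axioms infinite_UNIV_alg_closed)
    show "mvars (N l) \<subseteq> {0, 1}" for l
      by (simp add: N_def)
    show "(wa1 :: 'a mpoly) \<noteq> 0"
      by (rule wa1_neq_0)
  next
    fix x :: "nat \<Rightarrow> 'a alg_closure"
    assume "minsert to_ac x wa1 \<noteq> 0"
    then have "x 0 \<noteq> 0"
      by (simp add: to_ac.minsert_wa1)
    then show "minsert to_ac x F = minsert to_ac (\<lambda>l. minsert to_ac
        (\<lambda>i. if i = 0 then minsert to_ac x wa1 else minsert to_ac x wDelta / minsert to_ac x wa1 ^ 6) (N l)) F"
      unfolding G1_invariant_eval_char2[of F x, OF assms F \<open>x 0 \<noteq> 0\<close>]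
        to_ac.minsert_wa1 to_ac.minsert_wDelta
      by (simp add: N_eval)
  next
    show "\<exists>Y. (\<forall>u. minsert to_ac (\<lambda>l. poly (Y l) u) (wa1 :: 'a mpoly) = u)
        \<and> minsert to_ac (\<lambda>l. poly (Y l) 0) (wDelta :: 'a mpoly) = z" for z
      using assms by (rule wa1_wDelta_curve)
  qed
qed

lemma G1_invariants_subset_char3:
  assumes "CHAR('a::field) = 3"
  shows "G1_invariants \<subseteq> alg_gen [wb2, wDelta :: 'a mpoly]"
proof
  fix F :: "'a mpoly" assume F: "F \<in> G1_invariants"
  define N :: "nat \<Rightarrow> 'a mpoly" where "N l = (if l = 1 then mVar 0 else if l = 4 then - mVar 1 else 0)" for l
  have N_eval: "minsert to_ac v (N l) = (if l = 1 then v 0 else if l = 4 then - v 1 else 0)" for v l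
    by (simp add: N_def to_ac.minsert_mVar to_ac.hom_uminus
        comm_ring_hom.hom_uminus[OF to_ac.comm_ring_hom_minsert])
  show "F \<in> alg_gen [wb2, wDelta]"
  proof (rule mem_alg_gen_if_normal_form[where h = to_ac and k = 3 and N = N])
    show "comm_ring_hom to_ac" "infinite (UNIV :: 'a alg_closure set)"
      by (simp_all add: to_ac.comm_ring_hom_axioms infinite_UNIV_alg_closed)
    show "mvars (N l) \<subseteq> {0, 1}" for l
      by (simp add: N_def)
    show "(wb2 :: 'a mpoly) \<noteq> 0"
      by (rule wb2_neq_0)
  next
    fix x :: "nat \<Rightarrow> 'a alg_closure"
    assume "minsert to_ac x wb2 \<noteq> 0"
    then have b2: "x 0 ^ 2 + 4 * x 1 \<noteq> 0"
      by (simp add: to_ac.minsert_wb2)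
    show "minsert to_ac x F = minsert to_ac (\<lambda>l. minsert to_ac
        (\<lambda>i. if i = 0 then minsert to_ac x wb2 else minsert to_ac x wDelta / minsert to_ac x wb2 ^ 3) (N l)) F"
      unfolding G1_invariant_eval_char3[of F x, OF assms F b2]
        to_ac.minsert_wb2 to_ac.minsert_wDelta
      by (simp add: N_eval)
  next
    show "\<exists>Y. (\<forall>u. minsert to_ac (\<lambda>l. poly (Y l) u) (wb2 :: 'a mpoly) = u)
        \<and> minsert to_ac (\<lambda>l. poly (Y l) 0) (wDelta :: 'a mpoly) = z" for z
      using assms by (rule wb2_wDelta_curve)
  qed
qed

theorem lemma10p1:
  assumes "perfect_field TYPE('a::field)"
  shows "(CHAR('a) = 2 \<longrightarrow> (G1_invariants :: 'a mpoly set) = alg_gen [wa1, wDelta])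
       \<and> (CHAR('a) = 3 \<longrightarrow> (G1_invariants :: 'a mpoly set) = alg_gen [wb2, wDelta])"
proof (intro conjI impI)
  assume char: "CHAR('a) = 2"
  show "(G1_invariants :: 'a mpoly set) = alg_gen [wa1, wDelta]"
  proof
    show "G1_invariants \<subseteq> alg_gen [wa1, wDelta :: 'a mpoly]"
      using char by (rule G1_invariants_subset_char2)
    show "alg_gen [wa1, wDelta :: 'a mpoly] \<subseteq> G1_invariants"
      using wa1_mem_G1_invariants[OF char] wDelta_mem_G1_invariants
      by (intro alg_gen_subset_G1_invariants) simp
  qed
next
  assume char: "CHAR('a) = 3"
  show "(G1_invariants :: 'a mpoly set) = alg_gen [wb2, wDelta]"
  proof
    show "G1_invariants \<subseteq> alg_gen [wb2, wDelta :: 'a mpoly]"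
      using char by (rule G1_invariants_subset_char3)
    show "alg_gen [wb2, wDelta :: 'a mpoly] \<subseteq> G1_invariants"
      using wb2_mem_G1_invariants[OF char] wDelta_mem_G1_invariants
      by (intro alg_gen_subset_G1_invariants) simp
  qed
qed

end
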